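(* Let $n\ge 2$ be an integer and $K=L=T=n^2$. Then every degree table $(\alpha,\beta)\in\mathcal{A}(K,L,T)$ satisfies $\operatorname{N}(\alpha,\beta)\ge n^4+3n^2$. Moreover, letting $G(n)$ denote the number of distinct integers in $\operatorname{Set}(\alpha)+\operatorname{Set}(\beta)$ for the $\mathsf{GASP}_n$ vectors with $K=L=T=n^2$, one has $G(n)/(n^4+3n^2)<1.38$ for all $n\ge 2$ and $G(n)/(n^4+3n^2)\to 1$ as $n\to\infty$; in particular $\mathsf{GASP}_n$ is asymptotically optimal, i.e. $G(n)/\min_{(\alpha,\beta)\in\mathcal{A}(n^2,n^2,n^2)}\operatorname{N}(\alpha,\beta)\to 1$.
   Context: A degree table with parameters $K,L,T$ is a tuple $(\alpha_{\mathrm p},\alpha_{\mathrm s},\beta_{\mathrm p},\beta_{\mathrm s})$ of nonnegative integer vectors of lengths $K,T,L,T$ such that, with $\alpha=(\alpha_{\mathrm p}\mid\alpha_{\mathrm s})$, $\beta=(\beta_{\mathrm p}\mid\beta_{\mathrm s})$: entries of $\alpha$ are distinct; entries of $\beta$ are distinct; for every $n\in\operatorname{Set}(\alpha_{\mathrm p})+\operatorname{Set}(\beta_{\mathrm p})$ there is a unique $i\in\operatorname{Set}(\alpha)$ and unique $j\in\operatorname{Set}(\beta)$ with $n=i+j$. $\mathcal{A}(K,L,T)$ is the set of these, $\operatorname{N}(\alpha,\beta)=|\operatorname{Set}(\alpha)+\operatorname{Set}(\beta)|$, $\operatorname{Set}(v)$ is the set of entries of $v$, $A+B=\{a+b\}$.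 The code $\mathsf{GASP}_r$ ($L\le K$, $1\le r\le\min\{K,T\}$): $\alpha_{\mathrm p}=(0,1,\ldots,K-1)$; $\alpha_{\mathrm s}$ = the $T$ smallest elements of $\{KL+j+Kt: 0\le j\le r-1, t\in\mathbb{Z}_{\ge0}\}$ in increasing order; $\beta_{\mathrm p}=(0,K,\ldots,K(L-1))$; $\beta_{\mathrm s}=(KL,\ldots,KL+T-1)$. *)

theory Defs
  imports Complex_Main
begin

definition sumset :: "nat set \<Rightarrow> nat set \<Rightarrow> nat set" where
  "sumset A B = {a + b | a b. a \<in> A \<and> b \<in> B}"

definition is_degree_table ::
  "nat \<Rightarrow> nat \<Rightarrow> nat \<Rightarrow> nat list \<Rightarrow> nat list \<Rightarrow> nat list \<Rightarrow> nat list \<Rightarrow> bool" where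
  "is_degree_table K L T ap as bp bs \<longleftrightarrow>
     length ap = K \<and> length as = T \<and> length bp = L \<and> length bs = T \<and>
     distinct (ap @ as) \<and> distinct (bp @ bs) \<and>
     (\<forall>n \<in> sumset (set ap) (set bp).
        \<exists>!p. p \<in> set (ap @ as) \<times> set (bp @ bs) \<and> fst p + snd p = n)"

definition NN :: "nat list \<Rightarrow> nat list \<Rightarrow> nat" where
  "NN \<alpha> \<beta> = card (sumset (set \<alpha>) (set \<beta>))"

definition minN :: "nat \<Rightarrow> nat \<Rightarrow> nat \<Rightarrow> nat" where
  "minN K L T = Min {NN (ap @ as) (bp @ bs) | ap as bp bs. is_degree_table K L T ap as bp bs}"

definition gasp_S :: "nat \<Rightarrow> nat \<Rightarrow> nat \<Rightarrow> nat set" where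
  "gasp_S K L r = {K * L + j + K * t | j t. j \<le> r - 1}"

definition gasp_ap :: "nat \<Rightarrow> nat list" where
  "gasp_ap K = [0..<K]"

text \<open>The T smallest elements of gasp_S, in increasing order.\<close>
definition gasp_as :: "nat \<Rightarrow> nat \<Rightarrow> nat \<Rightarrow> nat \<Rightarrow> nat list" where
  "gasp_as K L T r = sorted_list_of_set
     {x \<in> gasp_S K L r. card {y \<in> gasp_S K L r. y < x} < T}"

definition gasp_bp :: "nat \<Rightarrow> nat \<Rightarrow> nat list" where
  "gasp_bp K L = map (\<lambda>i. K * i) [0..<L]"

definition gasp_bs :: "nat \<Rightarrow> nat \<Rightarrow> nat \<Rightarrow> nat list" where
  "gasp_bs K L T = [K * L..<K * L + T]"

definition G :: "nat \<Rightarrow> nat" where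
  "G n = NN (gasp_ap (n^2) @ gasp_as (n^2) (n^2) (n^2) n)
            (gasp_bp (n^2) (n^2) @ gasp_bs (n^2) (n^2) (n^2))"

end

theory Submission
  imports Defs "HOL-Real_Asymp.Real_Asymp"
begin

text \<open>In a degree table the \<open>K L\<close> sums of two primary degrees are pairwise distinct and differ
  from every sum involving a secret degree. For finite \<open>X, Y\<close> one has
  \<open>|X + Y| \<ge> |X| + |Y|\<close> unless \<open>X\<close> is an arithmetic progression whose difference is a
  difference of two elements of \<open>Y\<close>. If both \<open>\<alpha> + \<beta>\<^sub>s\<close> and \<open>\<alpha>\<^sub>s + \<beta>\<close> were
  small, \<open>\<alpha>\<close> and \<open>\<beta>\<close> would be progressions whose differences divide each other, so
  \<open>\<alpha> + \<beta>\<close> would lie in one progression of length \<open>|\<alpha>| + |\<beta>|\<close>, too short to hold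
  the \<open>K L\<close> primary sums.
  Hence at least \<open>min K L + 2T\<close> further sums occur.

  For \<open>GASP\<^sub>n\<close> with \<open>K = L = T = m = n\<^sup>2\<close> the sumset is covered by \<open>[0, m\<^sup>2 + 2m - 1)\<close>,
  \<open>n\<close> residues in each of \<open>m - 2\<close> further blocks of length \<open>m\<close>, and
  \<open>[2m\<^sup>2, 2m\<^sup>2 + m n + n - 1)\<close>, so \<open>G(n) \<le> n\<^sup>4 + 2n\<^sup>3 + 2n\<^sup>2 - n - 2\<close>;
  the ratio statements follow by squeezing.\<close>

section \<open>Sumsets and arithmetic progressions\<close>

lemma sumset_iff: "z \<in> sumset A B \<longleftrightarrow> (\<exists>a\<in>A. \<exists>b\<in>B. z = a + b)"
  by (auto simp: sumset_def)

lemma sumset_eq_image: "sumset A B = (\<lambda>(a, b). a + b) ` (A \<times> B)"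
  by (auto simp: sumset_def)

lemma sumset_commute: "sumset A B = sumset B A"
  unfolding sumset_def by (metis add.commute)

lemma sumset_empty_iff: "sumset A B = {} \<longleftrightarrow> A = {} \<or> B = {}"
  unfolding sumset_def by blast

lemma sumset_Un_left: "sumset (A \<union> A') B = sumset A B \<union> sumset A' B"
  unfolding sumset_def by blast

lemma finite_sumset: "finite A \<Longrightarrow> finite B \<Longrightarrow> finite (sumset A B)"
  by (simp add: sumset_eq_image)

lemma card_sumset_le: "finite A \<Longrightarrow> finite B \<Longrightarrow> card (sumset A B) \<le> card A * card B"
  unfolding sumset_eq_image by (metis card_cartesian_product card_image_le finite_SigmaI)

definition arith_prog :: "nat \<Rightarrow> nat \<Rightarrow> nat \<Rightarrow> nat set" where
  "arith_prog a d k = (\<lambda>j. a + j * d) ` {..<k}"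

lemma finite_arith_prog [simp]: "finite (arith_prog a d k)"
  by (simp add: arith_prog_def)

lemma card_arith_prog_le: "card (arith_prog a d k) \<le> k"
  unfolding arith_prog_def by (metis card_image_le card_lessThan finite_lessThan)

lemma card_arith_prog: "0 < d \<Longrightarrow> card (arith_prog a d k) = k"
  unfolding arith_prog_def by (subst card_image) (auto simp: inj_on_def)

lemma dvd_diff_arith_prog:
  assumes "x \<in> arith_prog a d k" "y \<in> arith_prog a d k"
  shows "d dvd y - x"
proof -
  obtain i j where "x = a + i * d" "y = a + j * d"
    using assms unfolding arith_prog_def by blast
  then have "y - x = (j - i) * d" by (simp add: diff_mult_distrib)
  then show ?thesis by simp
qed

lemma sumset_arith_prog:
  "sumset (arith_prog a d k) (arith_prog b d l) \<subseteq> arith_prog (a + b) d (k + l)"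
proof
  fix z assume "z \<in> sumset (arith_prog a d k) (arith_prog b d l)"
  then obtain i j where "i < k" "j < l" "z = (a + i * d) + (b + j * d)"
    unfolding sumset_def arith_prog_def by blast
  then have "i + j < k + l" "z = a + b + (i + j) * d" by (simp_all add: algebra_simps)
  then show "z \<in> arith_prog (a + b) d (k + l)" unfolding arith_prog_def by blast
qed

text \<open>Every element reaches the maximum in steps of \<open>d\<close>, and the minimum reaches every term of
  the progression up to the maximum.\<close>
lemma arith_prog_if_step_closed:
  fixes X :: "nat set"
  assumes "finite X" "X \<noteq> {}" "0 < d"
    and step: "\<And>x. x \<in> X \<Longrightarrow> x \<noteq> Max X \<Longrightarrow> x + d \<in> X"
  shows "\<exists>a. X = arith_prog a d (card X)"
proof -
  define a where "a = Min X"
  define M where "M = Max X"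
  have aX: "a \<in> X" and bounds: "\<And>x. x \<in> X \<Longrightarrow> a \<le> x \<and> x \<le> M"
    using assms(1,2) by (simp_all add: a_def M_def)
  have reach_max: "\<exists>j. M = x + j * d" if "x \<in> X" for x
    using that
  proof (induction "M - x" arbitrary: x rule: less_induct)
    case less
    show ?case
    proof (cases "x = M")
      case False
      then have xd: "x + d \<in> X" using step less.prems M_def by blast
      with bounds[OF less.prems] bounds[OF xd] False \<open>0 < d\<close>
      have "M - (x + d) < M - x" by linarith
      from less.hyps[OF this xd] obtain j where "M = x + d + j * d" by blast
      then show ?thesis by (metis add.assoc mult_Suc)
    qed simp
  qed
  have from_min: "a + j * d \<in> X" if "a + j * d \<le> M" for j
    using that
  proof (induction j)
    case (Suc j)
    then have "a + j * d \<in> X" "a + j * d \<noteq> M" using \<open>0 < d\<close> by simp_all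
    then have "a + j * d + d \<in> X" using step M_def by blast
    then show ?case by (simp add: algebra_simps)
  qed (simp add: aX)
  obtain J where J: "M = a + J * d" using reach_max[OF aX] by blast
  have "X = arith_prog a d (Suc J)"
  proof
    show "X \<subseteq> arith_prog a d (Suc J)"
    proof
      fix x assume "x \<in> X"
      then obtain j where j: "M = x + j * d" using reach_max by blast
      with J bounds[OF \<open>x \<in> X\<close>] have "j * d \<le> J * d" by linarith
      then have "j \<le> J" using \<open>0 < d\<close> by simp
      with j J have "x = a + (J - j) * d" by (simp add: diff_mult_distrib)
      then show "x \<in> arith_prog a d (Suc J)" unfolding arith_prog_def by auto
    qed
    show "arith_prog a d (Suc J) \<subseteq> X"
      using from_min J by (auto simp: arith_prog_def)
  qed
  then show ?thesis using card_arith_prog[OF \<open>0 < d\<close>] by metis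
qed

text \<open>The translates \<open>X + min Y\<close> and \<open>max X + Y\<close> meet only in \<open>max X + min Y\<close>.\<close>
lemma card_translates_Un:
  fixes X Y :: "nat set"
  assumes "finite X" "finite Y" "X \<noteq> {}" "Y \<noteq> {}"
  shows "card ((\<lambda>x. x + Min Y) ` X \<union> (\<lambda>y. Max X + y) ` Y) + 1 = card X + card Y"
proof -
  let ?C1 = "(\<lambda>x. x + Min Y) ` X" and ?C2 = "(\<lambda>y. Max X + y) ` Y"
  have "?C1 \<inter> ?C2 = {Max X + Min Y}"
  proof
    show "?C1 \<inter> ?C2 \<subseteq> {Max X + Min Y}"
    proof
      fix z assume "z \<in> ?C1 \<inter> ?C2"
      then obtain x y where "x \<in> X" "y \<in> Y" "z = x + Min Y" "z = Max X + y" by blast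
      moreover have "x \<le> Max X" "Min Y \<le> y" using calculation assms by simp_all
      ultimately show "z \<in> {Max X + Min Y}" by simp
    qed
    show "{Max X + Min Y} \<subseteq> ?C1 \<inter> ?C2" using assms by simp
  qed
  moreover have "card ?C1 = card X" "card ?C2 = card Y"
    by (simp_all add: card_image)
  ultimately show ?thesis
    using card_Un_Int[of ?C1 ?C2] assms by simp
qed

text \<open>With \<open>c\<^sub>1 < c\<^sub>2\<close> the two smallest elements of \<open>Y\<close>, a non-maximal \<open>x \<in> X\<close> with
  \<open>x + c\<^sub>2 \<notin> X + c\<^sub>1\<close> adds a new sum to the chain of \<open>card_translates_Un\<close>; if there is
  none, \<open>X\<close> is closed under the step \<open>c\<^sub>2 - c\<^sub>1\<close>.\<close>
lemma card_sumset_ge_or_arith_prog: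
  fixes X Y :: "nat set"
  assumes "finite X" "finite Y" "X \<noteq> {}" "2 \<le> card Y"
  shows "card X + card Y \<le> card (sumset X Y) \<or>
    (\<exists>a y\<^sub>1 y\<^sub>2. y\<^sub>1 \<in> Y \<and> y\<^sub>2 \<in> Y \<and> y\<^sub>1 < y\<^sub>2 \<and> X = arith_prog a (y\<^sub>2 - y\<^sub>1) (card X))"
proof -
  define c\<^sub>1 where "c\<^sub>1 = Min Y"
  define c\<^sub>2 where "c\<^sub>2 = Min (Y - {c\<^sub>1})"
  define M where "M = Max X"
  have "Y \<noteq> {}" using assms(4) by auto
  then have c\<^sub>1: "c\<^sub>1 \<in> Y" "\<And>y. y \<in> Y \<Longrightarrow> c\<^sub>1 \<le> y"
    using assms(2) by (simp_all add: c\<^sub>1_def)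
  have fin_Y': "finite (Y - {c\<^sub>1})" using assms(2) by simp
  have "Y - {c\<^sub>1} \<noteq> {}"
  proof
    assume "Y - {c\<^sub>1} = {}"
    then have "card Y \<le> card {c\<^sub>1}" by (intro card_mono) auto
    with assms(4) show False by simp
  qed
  with fin_Y' have c\<^sub>2: "c\<^sub>2 \<in> Y - {c\<^sub>1}" unfolding c\<^sub>2_def by (rule Min_in)
  have c\<^sub>2_le: "c\<^sub>2 \<le> y" if "y \<in> Y - {c\<^sub>1}" for y
    unfolding c\<^sub>2_def using fin_Y' that by (rule Min_le)
  have "c\<^sub>1 < c\<^sub>2" using c\<^sub>1(2)[of c\<^sub>2] c\<^sub>2 by auto
  have M: "M \<in> X" "\<And>x. x \<in> X \<Longrightarrow> x \<le> M"
    using assms(1,3) by (simp_all add: M_def)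
  let ?C = "(\<lambda>x. x + c\<^sub>1) ` X \<union> (\<lambda>y. M + y) ` Y"
  have card_C: "card ?C + 1 = card X + card Y"
    using card_translates_Un[OF assms(1,2,3) \<open>Y \<noteq> {}\<close>] by (simp add: c\<^sub>1_def M_def)
  have C_sub: "?C \<subseteq> sumset X Y" using M(1) c\<^sub>1(1) unfolding sumset_def by blast
  have fin: "finite (sumset X Y)" using assms(1,2) by (rule finite_sumset)
  show ?thesis
  proof (cases "\<exists>x\<in>X. x \<noteq> M \<and> x + c\<^sub>2 \<notin> (\<lambda>x. x + c\<^sub>1) ` X")
    case True
    then obtain x where x: "x \<in> X" "x \<noteq> M" "x + c\<^sub>2 \<notin> (\<lambda>x. x + c\<^sub>1) ` X" by blast
    have "x + c\<^sub>2 \<notin> (\<lambda>y. M + y) ` Y"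
    proof
      assume "x + c\<^sub>2 \<in> (\<lambda>y. M + y) ` Y"
      then obtain y where y: "y \<in> Y" "x + c\<^sub>2 = M + y" by blast
      have "x < M" using M(2)[OF x(1)] x(2) by simp
      with y(2) have "y < c\<^sub>2" by linarith
      then have "y = c\<^sub>1" using c\<^sub>2_le[of y] y(1) by (cases "y = c\<^sub>1") auto
      then have "x + c\<^sub>2 = M + c\<^sub>1" using y by simp
      moreover have "M + c\<^sub>1 \<in> (\<lambda>x. x + c\<^sub>1) ` X" using M(1) by blast
      ultimately show False using x(3) by simp
    qed
    then have "x + c\<^sub>2 \<notin> ?C" using x(3) by blast
    moreover have "insert (x + c\<^sub>2) ?C \<subseteq> sumset X Y"
      using C_sub x(1) c\<^sub>2 unfolding sumset_def by blast
    moreover have "finite ?C" using finite_subset[OF C_sub fin] .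
    ultimately have "card ?C + 1 \<le> card (sumset X Y)"
      using card_mono[OF fin] by (metis card_insert_disjoint Suc_eq_plus1)
    then show ?thesis using card_C by simp
  next
    case False
    have "x + (c\<^sub>2 - c\<^sub>1) \<in> X" if x: "x \<in> X" "x \<noteq> Max X" for x
    proof -
      have "x + c\<^sub>2 \<in> (\<lambda>x. x + c\<^sub>1) ` X" using False x unfolding M_def by blast
      then obtain x' where "x' \<in> X" "x + c\<^sub>2 = x' + c\<^sub>1" by blast
      then show ?thesis using \<open>c\<^sub>1 < c\<^sub>2\<close> by simp
    qed
    then have "\<exists>a. X = arith_prog a (c\<^sub>2 - c\<^sub>1) (card X)"
      using arith_prog_if_step_closed assms(1,3) \<open>c\<^sub>1 < c\<^sub>2\<close> by simp
    then obtain a where "X = arith_prog a (c\<^sub>2 - c\<^sub>1) (card X)" ..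
    moreover have "c\<^sub>1 \<in> Y" "c\<^sub>2 \<in> Y" using c\<^sub>1(1) c\<^sub>2 by simp_all
    ultimately show ?thesis using \<open>c\<^sub>1 < c\<^sub>2\<close> by blast
  qed
qed

text \<open>If both \<open>A\<close> and \<open>B\<close> were progressions whose differences occur in \<open>B\<^sub>0 \<subseteq> B\<close> and
  \<open>A\<^sub>0 \<subseteq> A\<close> respectively, each difference would divide the other, so \<open>A + B\<close> would lie in a
  single progression of length \<open>card A + card B\<close>.\<close>
lemma card_sumset_Un_ge:
  fixes A B A\<^sub>0 B\<^sub>0 :: "nat set"
  assumes "finite A" "finite B" "A\<^sub>0 \<subseteq> A" "B\<^sub>0 \<subseteq> B" "2 \<le> card A\<^sub>0" "2 \<le> card B\<^sub>0"
    and large: "card A + card B < card (sumset A B)"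
  shows "min (card A + card B\<^sub>0) (card A\<^sub>0 + card B) \<le> card (sumset A B\<^sub>0 \<union> sumset A\<^sub>0 B)"
proof -
  have fin: "finite A\<^sub>0" "finite B\<^sub>0" using assms(1-4) finite_subset by blast+
  have ne: "A \<noteq> {}" "B \<noteq> {}" using assms(3-6) by auto
  have fin_Un: "finite (sumset A B\<^sub>0 \<union> sumset A\<^sub>0 B)"
    using assms(1,2) fin by (simp add: finite_sumset)
  show ?thesis
  proof (rule ccontr)
    assume small: "\<not> ?thesis"
    have "\<not> card A + card B\<^sub>0 \<le> card (sumset A B\<^sub>0)"
      using small card_mono[OF fin_Un, of "sumset A B\<^sub>0"] by auto
    then obtain a y\<^sub>1 y\<^sub>2 where y: "y\<^sub>1 \<in> B\<^sub>0" "y\<^sub>2 \<in> B\<^sub>0" "y\<^sub>1 < y\<^sub>2"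
      and A: "A = arith_prog a (y\<^sub>2 - y\<^sub>1) (card A)"
      using card_sumset_ge_or_arith_prog[OF assms(1) fin(2) ne(1) assms(6)] by blast
    have "\<not> card B + card A\<^sub>0 \<le> card (sumset B A\<^sub>0)"
      using small card_mono[OF fin_Un, of "sumset A\<^sub>0 B"] by (auto simp: sumset_commute)
    then obtain b x\<^sub>1 x\<^sub>2 where x: "x\<^sub>1 \<in> A\<^sub>0" "x\<^sub>2 \<in> A\<^sub>0" "x\<^sub>1 < x\<^sub>2"
      and B: "B = arith_prog b (x\<^sub>2 - x\<^sub>1) (card B)"
      using card_sumset_ge_or_arith_prog[OF assms(2) fin(1) ne(2) assms(5)] by blast
    have "y\<^sub>2 - y\<^sub>1 dvd x\<^sub>2 - x\<^sub>1" using dvd_diff_arith_prog x assms(3) A by blast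
    moreover have "x\<^sub>2 - x\<^sub>1 dvd y\<^sub>2 - y\<^sub>1" using dvd_diff_arith_prog y assms(4) B by blast
    ultimately have "x\<^sub>2 - x\<^sub>1 = y\<^sub>2 - y\<^sub>1" by (simp add: dvd_antisym)
    then have "sumset A B \<subseteq> arith_prog (a + b) (y\<^sub>2 - y\<^sub>1) (card A + card B)"
      using sumset_arith_prog A B by metis
    then have "card (sumset A B) \<le> card (arith_prog (a + b) (y\<^sub>2 - y\<^sub>1) (card A + card B))"
      by (rule card_mono[OF finite_arith_prog])
    also have "\<dots> \<le> card A + card B" by (rule card_arith_prog_le)
    finally show False using large by simp
  qed
qed

section \<open>A lower bound for degree tables\<close>

lemma degree_table_sets:
  assumes "is_degree_table K L T ap as bp bs"
  shows "card (set ap) = K" "card (set as) = T" "card (set bp) = L" "card (set bs) = T"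
    and "set ap \<inter> set as = {}" "set bp \<inter> set bs = {}"
  using assms unfolding is_degree_table_def by (auto simp: distinct_card)

lemma degree_table_sum_unique:
  assumes "is_degree_table K L T ap as bp bs"
    and "a \<in> set ap" "b \<in> set bp" "x \<in> set (ap @ as)" "y \<in> set (bp @ bs)" "x + y = a + b"
  shows "x = a \<and> y = b"
proof -
  have "a + b \<in> sumset (set ap) (set bp)" using assms(2,3) unfolding sumset_def by blast
  then have "\<exists>!p. p \<in> set (ap @ as) \<times> set (bp @ bs) \<and> fst p + snd p = a + b"
    using assms(1) unfolding is_degree_table_def by blast
  moreover have "(a, b) \<in> set (ap @ as) \<times> set (bp @ bs)" using assms(2,3) by simp
  ultimately have "(x, y) = (a, b)" using assms(4-6) by (metis fst_conv snd_conv mem_Times_iff)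
  then show ?thesis by simp
qed

lemma degree_table_card_primary_sumset:
  assumes "is_degree_table K L T ap as bp bs"
  shows "card (sumset (set ap) (set bp)) = K * L"
proof -
  have "inj_on (\<lambda>(a, b). a + b) (set ap \<times> set bp)"
    using degree_table_sum_unique[OF assms] by (auto intro!: inj_onI)
  then show ?thesis
    using degree_table_sets[OF assms] by (simp add: sumset_eq_image card_image card_cartesian_product)
qed

text \<open>The second summand counts the set \<open>R\<close> of the paper, the sums involving a secret degree;
  none of them is a primary sum.\<close>
lemma degree_table_NN_ge:
  assumes "is_degree_table K L T ap as bp bs"
  shows "K * L + card (sumset (set (ap @ as)) (set bs) \<union> sumset (set as) (set (bp @ bs)))
    \<le> NN (ap @ as) (bp @ bs)"
proof -
  let ?P = "sumset (set ap) (set bp)"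
  let ?R = "sumset (set (ap @ as)) (set bs) \<union> sumset (set as) (set (bp @ bs))"
  have "z \<notin> ?R" if "z \<in> ?P" for z
  proof
    assume "z \<in> ?R"
    then obtain x y where xy: "x \<in> set (ap @ as)" "y \<in> set (bp @ bs)" "z = x + y"
      and secret: "x \<in> set as \<or> y \<in> set bs"
      by (auto simp: sumset_iff)
    obtain a b where "a \<in> set ap" "b \<in> set bp" "z = a + b"
      using \<open>z \<in> ?P\<close> by (auto simp: sumset_iff)
    with xy have "x \<in> set ap" "y \<in> set bp"
      using degree_table_sum_unique[OF assms] by metis+
    with secret degree_table_sets(5,6)[OF assms] show False by blast
  qed
  then have "card ?P + card ?R = card (?P \<union> ?R)"
    by (intro card_Un_disjoint[symmetric]) (auto simp: finite_sumset)
  also have "\<dots> \<le> NN (ap @ as) (bp @ bs)"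
    unfolding NN_def by (intro card_mono) (simp add: finite_sumset, auto simp: sumset_def)
  finally show ?thesis using degree_table_card_primary_sumset[OF assms] by simp
qed

theorem degree_table_NN_lower_bound:
  assumes table: "is_degree_table K L T ap as bp bs"
    and "2 \<le> T" and "K + L + 2 * T \<le> K * L"
  shows "K * L + min K L + 2 * T \<le> NN (ap @ as) (bp @ bs)"
proof -
  let ?A = "set (ap @ as)" and ?B = "set (bp @ bs)"
  let ?R = "sumset ?A (set bs) \<union> sumset (set as) ?B"
  note cards = degree_table_sets[OF table]
  have card_A: "card ?A = K + T" and card_B: "card ?B = L + T"
    using cards by (simp_all add: card_Un_disjoint)
  have "?R \<noteq> {}" using cards \<open>2 \<le> T\<close> by (auto simp: sumset_empty_iff)
  then have "0 < card ?R" by (simp add: card_gt_0_iff finite_sumset)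
  with degree_table_NN_ge[OF table] \<open>K + L + 2 * T \<le> K * L\<close>
  have "card ?A + card ?B < card (sumset ?A ?B)"
    unfolding card_A card_B NN_def by linarith
  then have "min (card ?A + card (set bs)) (card (set as) + card ?B) \<le> card ?R"
    using cards \<open>2 \<le> T\<close> by (intro card_sumset_Un_ge) auto
  then show ?thesis
    using degree_table_NN_ge[OF table] cards card_A card_B by simp
qed

lemma NN_le_degree_table:
  assumes "is_degree_table K L T ap as bp bs"
  shows "NN (ap @ as) (bp @ bs) \<le> (K + T) * (L + T)"
proof -
  have "NN (ap @ as) (bp @ bs) \<le> card (set (ap @ as)) * card (set (bp @ bs))"
    unfolding NN_def by (simp add: card_sumset_le)
  also have "\<dots> \<le> length (ap @ as) * length (bp @ bs)" by (intro mult_le_mono card_length)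
  finally show ?thesis using assms unfolding is_degree_table_def by simp
qed

lemma minN_le_and_attained:
  assumes "is_degree_table K L T ap as bp bs"
  shows "minN K L T \<le> NN (ap @ as) (bp @ bs)"
    and "\<exists>ap' as' bp' bs'. is_degree_table K L T ap' as' bp' bs' \<and> minN K L T = NN (ap' @ as') (bp' @ bs')"
proof -
  let ?V = "{NN (ap @ as) (bp @ bs) | ap as bp bs. is_degree_table K L T ap as bp bs}"
  have "?V \<subseteq> {..(K + T) * (L + T)}" using NN_le_degree_table by auto
  then have "finite ?V" by (rule finite_subset) simp
  moreover have "NN (ap @ as) (bp @ bs) \<in> ?V" using assms by blast
  ultimately show "minN K L T \<le> NN (ap @ as) (bp @ bs)" and "\<exists>ap' as' bp' bs'.
      is_degree_table K L T ap' as' bp' bs' \<and> minN K L T = NN (ap' @ as') (bp' @ bs')"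
    unfolding minN_def using Min_in[of ?V] by auto
qed

section \<open>The GASP code\<close>

lemma add_mult_eq_add_mult_iff:
  fixes j j' t t' K :: nat
  assumes "j < K" "j' < K"
  shows "j + K * t = j' + K * t' \<longleftrightarrow> j = j' \<and> t = t'"
proof
  assume eq: "j + K * t = j' + K * t'"
  then have "(j + K * t) mod K = (j' + K * t') mod K" "(j + K * t) div K = (j' + K * t') div K"
    by simp_all
  then show "j = j' \<and> t = t'" using assms by simp
qed simp

lemma rank_less_card_eq_initial_segment:
  fixes S E :: "nat set"
  assumes "finite E" "E \<subseteq> S" and initial: "\<And>x y. x \<in> E \<Longrightarrow> y \<in> S - E \<Longrightarrow> x < y"
  shows "{x \<in> S. card {y \<in> S. y < x} < card E} = E"
proof (intro equalityI subsetI)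
  fix x assume x: "x \<in> {x \<in> S. card {y \<in> S. y < x} < card E}"
  show "x \<in> E"
  proof (rule ccontr)
    assume "x \<notin> E"
    then have "E \<subseteq> {y \<in> S. y < x}" using initial x assms(2) by blast
    moreover have "finite {y \<in> S. y < x}" by (rule finite_subset[of _ "{..<x}"]) auto
    ultimately have "card E \<le> card {y \<in> S. y < x}" by (rule card_mono[rotated])
    with x show False by simp
  qed
next
  fix x assume "x \<in> E"
  have "{y \<in> S. y < x} \<subseteq> E - {x}"
  proof
    fix y assume "y \<in> {y \<in> S. y < x}"
    then have "y \<in> S" "y < x" by simp_all
    then have "y \<notin> S - E" using initial[OF \<open>x \<in> E\<close>, of y] by auto
    with \<open>y \<in> S\<close> \<open>y < x\<close> show "y \<in> E - {x}" by simp
  qed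
  then have "card {y \<in> S. y < x} \<le> card (E - {x})" using assms(1) by (simp add: card_mono)
  also have "\<dots> < card E" using \<open>x \<in> E\<close> assms(1) by (rule card_Diff1_less[rotated])
  finally show "x \<in> {x \<in> S. card {y \<in> S. y < x} < card E}" using \<open>x \<in> E\<close> assms(2) by blast
qed

lemma card_gasp_secret_degrees:
  assumes "r \<le> K"
  shows "card ((\<lambda>(j, t). K * L + j + K * t) ` ({..<r} \<times> {..<q})) = r * q"
proof -
  have "inj_on (\<lambda>(j, t). K * L + j + K * t) ({..<r} \<times> {..<q})"
    using assms by (intro inj_onI) (auto simp: add_mult_eq_add_mult_iff)
  then show ?thesis by (simp add: card_image card_cartesian_product)
qed

lemma gasp_as_eq:
  assumes "0 < r" "r \<le> K"
  shows "gasp_as K L (r * q) r = sorted_list_of_set ((\<lambda>(j, t). K * L + j + K * t) ` ({..<r} \<times> {..<q}))"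
proof -
  let ?E = "(\<lambda>(j, t). K * L + j + K * t) ` ({..<r} \<times> {..<q})"
  have S: "gasp_S K L r = {K * L + j + K * t | j t. j < r}"
    using \<open>0 < r\<close> unfolding gasp_S_def by force
  have initial: "x < y" if x_in: "x \<in> ?E" and y_in: "y \<in> gasp_S K L r - ?E" for x y
  proof -
    obtain j t where x: "j < r" "t < q" "x = K * L + j + K * t" using x_in by auto
    obtain j' t' where y: "j' < r" "y = K * L + j' + K * t'" using y_in S by auto
    have "q \<le> t'"
    proof (rule ccontr)
      assume "\<not> q \<le> t'"
      then have "y \<in> ?E" using y by (auto intro!: image_eqI[of _ _ "(j', t')"])
      then show False using y_in by simp
    qed
    have "j + K * t < K * Suc t" using x assms by simp
    also have "\<dots> \<le> K * t'" using x \<open>q \<le> t'\<close> by (intro mult_le_mono2) simp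
    finally show "x < y" using x y by simp
  qed
  have "?E \<subseteq> gasp_S K L r" using S by auto
  from rank_less_card_eq_initial_segment[OF finite_imageI[OF finite_cartesian_product] this initial]
  have "{x \<in> gasp_S K L r. card {y \<in> gasp_S K L r. y < x} < r * q} = ?E"
    using card_gasp_secret_degrees[OF \<open>r \<le> K\<close>] by simp
  then show ?thesis unfolding gasp_as_def by simp
qed

lemma set_gasp_as:
  assumes "0 < r" "r \<le> K"
  shows "set (gasp_as K L (r * q) r) = (\<lambda>(j, t). K * L + j + K * t) ` ({..<r} \<times> {..<q})"
  using gasp_as_eq[OF assms] by simp

lemma length_gasp_as:
  assumes "0 < r" "r \<le> K"
  shows "length (gasp_as K L (r * q) r) = r * q"
  using gasp_as_eq[OF assms] card_gasp_secret_degrees[OF assms(2)] by simp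

lemma set_gasp_ap_bp_bs:
  "set (gasp_ap K) = {..<K}"
  "set (gasp_bp K L) = (\<lambda>i. K * i) ` {..<L}"
  "set (gasp_bs K L T) = {K * L..<K * L + T}"
  unfolding gasp_ap_def gasp_bp_def gasp_bs_def by auto

lemma add_mult_less_mult:
  fixes a i K L :: nat
  assumes "a < K" "i < L"
  shows "a + K * i < K * L"
proof -
  have "a + K * i < K * Suc i" using assms by simp
  also have "\<dots> \<le> K * L" using assms by (intro mult_le_mono2) simp
  finally show ?thesis .
qed

lemma gasp_secret_ge:
  assumes "0 < r" "r \<le> K" "x \<in> set (gasp_as K L (r * q) r) \<union> set (gasp_bs K L (r * q))"
  shows "K * L \<le> x"
  using assms set_gasp_as[OF assms(1,2)] set_gasp_ap_bp_bs(3) by auto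

text \<open>Primary sums lie below \<open>K L\<close> and secret degrees do not, so a primary sum splits only into
  primary degrees, and there uniquely.\<close>
lemma gasp_primary_sum_unique:
  assumes "0 < r" "r \<le> K" "z \<in> sumset (set (gasp_ap K)) (set (gasp_bp K L))"
  shows "\<exists>!p. p \<in> set (gasp_ap K @ gasp_as K L (r * q) r) \<times> set (gasp_bp K L @ gasp_bs K L (r * q))
    \<and> fst p + snd p = z"
proof -
  note sets = set_gasp_ap_bp_bs set_gasp_as[OF assms(1,2)]
  obtain a i where ai: "a < K" "i < L" "z = a + K * i"
    using assms(3) sets by (auto simp: sumset_iff)
  show ?thesis
  proof (rule ex1I[of _ "(a, K * i)"])
    show "(a, K * i) \<in> set (gasp_ap K @ gasp_as K L (r * q) r) \<times> set (gasp_bp K L @ gasp_bs K L (r * q))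
        \<and> fst (a, K * i) + snd (a, K * i) = z"
      using ai sets by auto
  next
    fix p assume p: "p \<in> set (gasp_ap K @ gasp_as K L (r * q) r) \<times> set (gasp_bp K L @ gasp_bs K L (r * q))
        \<and> fst p + snd p = z"
    obtain x y where xy: "p = (x, y)" by fastforce
    have "z < K * L" using ai add_mult_less_mult by simp
    with p xy gasp_secret_ge[OF assms(1,2)] have "x \<in> set (gasp_ap K)" "y \<in> set (gasp_bp K L)"
      by fastforce+
    then obtain i' where "x < K" "i' < L" "y = K * i'" using sets by auto
    with ai p xy add_mult_eq_add_mult_iff show "p = (a, K * i)" by auto
  qed
qed

lemma gasp_is_degree_table:
  assumes "0 < r" "r \<le> K" "0 < L"
  shows "is_degree_table K L (r * q) (gasp_ap K) (gasp_as K L (r * q) r) (gasp_bp K L) (gasp_bs K L (r * q))"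
proof -
  have "K \<le> K * L" using assms by simp
  then have "x \<notin> set (gasp_as K L (r * q) r)" if "x < K" for x
  proof -
    have "\<not> K * L \<le> x" using that \<open>K \<le> K * L\<close> by linarith
    then show ?thesis using gasp_secret_ge[OF assms(1,2), of x L q] by blast
  qed
  then have "set (gasp_ap K) \<inter> set (gasp_as K L (r * q) r) = {}"
    using set_gasp_ap_bp_bs(1) by auto
  then have "distinct (gasp_ap K @ gasp_as K L (r * q) r)"
    by (simp add: gasp_ap_def gasp_as_def)
  moreover have "distinct (gasp_bp K L @ gasp_bs K L (r * q))"
    using add_mult_less_mult[of 0 K _ L] assms
    by (fastforce simp: gasp_bp_def gasp_bs_def distinct_map inj_on_def)
  ultimately show ?thesis
    unfolding is_degree_table_def using length_gasp_as[OF assms(1,2)] gasp_primary_sum_unique[OF assms(1,2)]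
    by (simp add: gasp_ap_def gasp_bp_def gasp_bs_def)
qed

lemma gasp_primary_sumset_subset:
  fixes m :: nat
  shows "sumset {..<m} ((\<lambda>i. m * i) ` {..<m} \<union> {m * m..<m * m + m}) \<subseteq> {..<m * m + 2 * m - 1}"
proof
  fix z assume "z \<in> sumset {..<m} ((\<lambda>i. m * i) ` {..<m} \<union> {m * m..<m * m + m})"
  then obtain x y where z: "z = x + y" "x < m" and y: "y \<in> (\<lambda>i. m * i) ` {..<m} \<union> {m * m..<m * m + m}"
    unfolding sumset_iff by auto
  have "y < m * m + m"
  proof (cases "y \<in> (\<lambda>i. m * i) ` {..<m}")
    case True
    then obtain i where "i < m" "y = m * i" by blast
    then have "y \<le> m * m" by simp
    then show ?thesis using \<open>x < m\<close> by linarith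
  qed (use y in simp)
  then show "z \<in> {..<m * m + 2 * m - 1}" using z by simp
qed

lemma gasp_secret_sumset_subset:
  fixes m n :: nat
  assumes "n < m"
  shows "sumset ((\<lambda>(j, t). m * m + j + m * t) ` ({..<n} \<times> {..<n}))
                ((\<lambda>i. m * i) ` {..<m} \<union> {m * m..<m * m + m})
    \<subseteq> {..<m * m + 2 * m - 1} \<union> (\<lambda>(j, u). m * m + j + m * u) ` ({..<n} \<times> {2..<m})
        \<union> {2 * m * m..<2 * m * m + m * n + n - 1}"
    (is "sumset ?E ?B \<subseteq> ?U\<^sub>1 \<union> ?U\<^sub>2 \<union> ?U\<^sub>3")
proof
  fix z assume "z \<in> sumset ?E ?B"
  then obtain j t y where jt: "j < n" "t < n" and z: "z = m * m + j + m * t + y" and y: "y \<in> ?B"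
    unfolding sumset_iff by auto
  show "z \<in> ?U\<^sub>1 \<union> ?U\<^sub>2 \<union> ?U\<^sub>3"
  proof (cases "y \<in> (\<lambda>i. m * i) ` {..<m}")
    case True
    then obtain i where "i < m" "y = m * i" by blast
    with z have z_eq: "z = m * m + j + m * (t + i)" by (simp add: algebra_simps)
    consider "t + i \<le> 1" | "2 \<le> t + i" "t + i < m" | "m \<le> t + i" by linarith
    then show ?thesis
    proof cases
      case 1
      then have "m * (t + i) \<le> m" using mult_le_mono2[of "t + i" 1 m] by simp
      then have "z < m * m + 2 * m - 1" using z_eq jt assms by linarith
      then show ?thesis by simp
    next
      case 2
      then have "z \<in> ?U\<^sub>2" using z_eq jt by (auto intro!: image_eqI[of _ _ "(j, t + i)"])
      then show ?thesis by simp
    next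
      case 3
      have "m * m \<le> m * (t + i)" using 3 by (rule mult_le_mono2)
      moreover have "m * (t + i + 2) \<le> m * (n + m)" using jt \<open>i < m\<close> by (intro mult_le_mono2) simp
      ultimately have "2 * m * m \<le> z" "z < 2 * m * m + m * n + n - 1"
        using z_eq jt assms by (simp_all add: algebra_simps)
      then show ?thesis by simp
    qed
  next
    case False
    then have c: "m * m \<le> y" "y < m * m + m" using y by auto
    have "m * (t + 1) \<le> m * n" using jt by (intro mult_le_mono2) simp
    then have "2 * m * m \<le> z" "z < 2 * m * m + m * n + n - 1"
      using z jt c assms by (simp_all add: algebra_simps)
    then show ?thesis by simp
  qed
qed

lemma card_gasp_sumset_le:
  fixes m n :: nat
  assumes "0 < n" "n < m"
  shows "card (sumset ({..<m} \<union> (\<lambda>(j, t). m * m + j + m * t) ` ({..<n} \<times> {..<n}))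
                      ((\<lambda>i. m * i) ` {..<m} \<union> {m * m..<m * m + m})) + n + 2
    \<le> m * m + 2 * m + 2 * m * n"
proof -
  let ?S = "sumset ({..<m} \<union> (\<lambda>(j, t). m * m + j + m * t) ` ({..<n} \<times> {..<n}))
                   ((\<lambda>i. m * i) ` {..<m} \<union> {m * m..<m * m + m})"
  let ?U\<^sub>1 = "{..<m * m + 2 * m - 1}" and ?U\<^sub>2 = "(\<lambda>(j, u). m * m + j + m * u) ` ({..<n} \<times> {2..<m})"
    and ?U\<^sub>3 = "{2 * m * m..<2 * m * m + m * n + n - 1}"
  have "?S \<subseteq> ?U\<^sub>1 \<union> ?U\<^sub>2 \<union> ?U\<^sub>3"
    using gasp_primary_sumset_subset gasp_secret_sumset_subset[OF assms(2)]
    unfolding sumset_Un_left by blast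
  then have "card ?S \<le> card (?U\<^sub>1 \<union> ?U\<^sub>2 \<union> ?U\<^sub>3)" by (rule card_mono[rotated]) simp
  also have "\<dots> \<le> card ?U\<^sub>1 + card ?U\<^sub>2 + card ?U\<^sub>3"
    by (meson card_Un_le add_le_mono1 order_trans)
  also have "\<dots> \<le> (m * m + 2 * m - 1) + n * (m - 2) + (m * n + n - 1)"
    using card_image_le[of "{..<n} \<times> {2..<m}" "\<lambda>(j, u). m * m + j + m * u"]
    by (simp add: card_cartesian_product)
  finally have "card ?S + n + 2 \<le> (m * m + 2 * m - 1) + n * (m - 2) + (m * n + n - 1) + n + 2"
    by simp
  also have "\<dots> = m * m + 2 * m + 2 * m * n"
    using assms by (simp add: algebra_simps diff_mult_distrib2)
  finally show ?thesis .
qed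

section \<open>Square parameters\<close>

lemma NN_lower_bound_square:
  assumes "2 \<le> n" "is_degree_table (n^2) (n^2) (n^2) ap as bp bs"
  shows "n^4 + 3 * n^2 \<le> NN (ap @ as) (bp @ bs)"
proof -
  have "4 \<le> n^2" using power_mono[OF assms(1), of 2] by simp
  then have "4 * n^2 \<le> n^2 * n^2" by (rule mult_le_mono1)
  with degree_table_NN_lower_bound[OF assms(2)] \<open>4 \<le> n^2\<close>
  have "n^2 * n^2 + min (n^2) (n^2) + 2 * n^2 \<le> NN (ap @ as) (bp @ bs)" by simp
  then show ?thesis by (simp flip: power_add)
qed

lemma gasp_square_is_degree_table:
  assumes "2 \<le> n"
  shows "is_degree_table (n^2) (n^2) (n^2) (gasp_ap (n^2)) (gasp_as (n^2) (n^2) (n^2) n)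
    (gasp_bp (n^2) (n^2)) (gasp_bs (n^2) (n^2) (n^2))"
  using gasp_is_degree_table[of n "n^2" "n^2" n] assms by (simp add: power2_eq_square)

lemma G_ge: "2 \<le> n \<Longrightarrow> n^4 + 3 * n^2 \<le> G n"
  unfolding G_def by (rule NN_lower_bound_square[OF _ gasp_square_is_degree_table])

lemma G_le:
  assumes "2 \<le> n"
  shows "G n + n + 2 \<le> n^4 + 2 * n^3 + 2 * n^2"
proof -
  have "n < n * n" using assms by simp
  then have "G n + n + 2 \<le> n * n * (n * n) + 2 * (n * n) + 2 * (n * n) * n"
    using card_gasp_sumset_le[of n "n * n"] assms
    by (simp add: G_def NN_def power2_eq_square set_gasp_as[of n "n * n", where q = n, simplified]
        set_gasp_ap_bp_bs)
  then show ?thesis by (simp add: eval_nat_numeral algebra_simps)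
qed

lemma G_ratio_less:
  assumes "2 \<le> n"
  shows "real (G n) / real (n^4 + 3 * n^2) < 1.38"
proof -
  \<comment> \<open>The bound is nearly attained at \<open>n = 3\<close>; from \<open>n = 6\<close> on the quartic term dominates.\<close>
  have "100 * (n^4 + 2 * n^3 + 2 * n^2) < 138 * (n^4 + 3 * n^2) + 100 * (n + 2)"
  proof (cases "n \<le> 5")
    case True
    then have "n = 2 \<or> n = 3 \<or> n = 4 \<or> n = 5" using assms by auto
    then show ?thesis by auto
  next
    case False
    then have "200 * n^3 \<le> 38 * n * n^3" by (intro mult_le_mono1) simp
    moreover have "n * n^3 = n^4" by (simp flip: power_Suc)
    ultimately show ?thesis by (simp add: mult.assoc)
  qed
  moreover have "100 * (G n + n + 2) \<le> 100 * (n^4 + 2 * n^3 + 2 * n^2)"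
    using G_le[OF assms] by (rule mult_le_mono2)
  ultimately have "100 * G n < 138 * (n^4 + 3 * n^2)" by simp
  then have "real (100 * G n) < real (138 * (n^4 + 3 * n^2))" by (simp only: of_nat_less_iff)
  then have "real (G n) < 1.38 * real (n^4 + 3 * n^2)" by simp
  moreover have "0 < n^4 + 3 * n^2" using assms by simp
  ultimately show ?thesis by (simp add: divide_less_eq)
qed

lemma one_le_real_divide: "0 < b \<Longrightarrow> b \<le> a \<Longrightarrow> 1 \<le> real a / real b"
  by simp

lemma real_divide_left_antimono: "0 < c \<Longrightarrow> c \<le> b \<Longrightarrow> real a / real b \<le> real a / real c"
  by (intro divide_left_mono) simp_all

lemma G_ratio_tendsto: "(\<lambda>n. real (G n) / real (n^4 + 3 * n^2)) \<longlonglongrightarrow> 1"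
proof (rule tendsto_sandwich)
  show "\<forall>\<^sub>F n in sequentially. 1 \<le> real (G n) / real (n^4 + 3 * n^2)"
    using eventually_ge_at_top[of 2]
  proof eventually_elim
    case (elim n)
    then show ?case using G_ge[OF elim] by (intro one_le_real_divide) simp_all
  qed
  let ?u = "\<lambda>n. (real n ^ 4 + 2 * real n ^ 3 + 2 * real n ^ 2) / (real n ^ 4 + 3 * real n ^ 2)"
  show "\<forall>\<^sub>F n in sequentially. real (G n) / real (n^4 + 3 * n^2) \<le> ?u n"
    using eventually_ge_at_top[of 2]
  proof eventually_elim
    case (elim n)
    have "G n \<le> n^4 + 2 * n^3 + 2 * n^2" using G_le[OF elim] by simp
    then have "real (G n) \<le> real (n^4 + 2 * n^3 + 2 * n^2)" by (simp only: of_nat_le_iff)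
    moreover have "real (n^4 + 3 * n^2) = real n ^ 4 + 3 * real n ^ 2" by simp
    ultimately show ?case by (simp add: divide_right_mono)
  qed
  show "?u \<longlonglongrightarrow> 1" by real_asymp
qed simp

lemma minN_square_bounds:
  assumes "2 \<le> n"
  shows "n^4 + 3 * n^2 \<le> minN (n^2) (n^2) (n^2)" "minN (n^2) (n^2) (n^2) \<le> G n"
  using minN_le_and_attained[OF gasp_square_is_degree_table[OF assms]] NN_lower_bound_square[OF assms]
  unfolding G_def by auto

lemma G_minN_ratio_tendsto: "(\<lambda>n. real (G n) / real (minN (n^2) (n^2) (n^2))) \<longlonglongrightarrow> 1"
proof (rule tendsto_sandwich[OF _ _ tendsto_const G_ratio_tendsto])
  show "\<forall>\<^sub>F n in sequentially. 1 \<le> real (G n) / real (minN (n^2) (n^2) (n^2))"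
    using eventually_ge_at_top[of 2]
  proof eventually_elim
    case (elim n)
    have "0 < n^4 + 3 * n^2" using elim by simp
    then show ?case using minN_square_bounds[OF elim] by (intro one_le_real_divide) linarith+
  qed
  show "\<forall>\<^sub>F n in sequentially.
      real (G n) / real (minN (n^2) (n^2) (n^2)) \<le> real (G n) / real (n^4 + 3 * n^2)"
    using eventually_ge_at_top[of 2]
  proof eventually_elim
    case (elim n)
    have "0 < n^4 + 3 * n^2" using elim by simp
    then show ?case using minN_square_bounds(1)[OF elim] by (rule real_divide_left_antimono)
  qed
qed

theorem corollary1:
  shows "(\<forall>n::nat. n \<ge> 2 \<longrightarrow> (\<forall>ap as bp bs.
            is_degree_table (n^2) (n^2) (n^2) ap as bp bs \<longrightarrow>
            NN (ap @ as) (bp @ bs) \<ge> n^4 + 3 * n^2))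
       \<and> (\<forall>n::nat. n \<ge> 2 \<longrightarrow> real (G n) / real (n^4 + 3 * n^2) < 1.38)
       \<and> (\<lambda>n. real (G n) / real (n^4 + 3 * n^2)) \<longlonglongrightarrow> 1
       \<and> (\<lambda>n. real (G n) / real (minN (n^2) (n^2) (n^2))) \<longlonglongrightarrow> 1"
  using NN_lower_bound_square G_ratio_less G_ratio_tendsto G_minN_ratio_tendsto by blast

end
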